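(* Let $0<A_0<A_1$, $0<\sigma<1$ and let $p\ge2$ be an integer. Then the set of $b\in[0,1]$ for which there are infinitely many pairs of integers $0<m<n$ satisfying $$A_0<\frac{b^{p^m}}{\sigma^{n-m}}<A_1$$ is a dense $G_\delta$ subset of $[0,1]$ of full Lebesgue measure. *)

theory Defs
  imports "HOL-Analysis.Analysis"
begin

definition good_set :: "real \<Rightarrow> real \<Rightarrow> real \<Rightarrow> nat \<Rightarrow> real set" where
  "good_set A0 A1 \<sigma> p = {b \<in> {0..1}. infinite ({(m, n). 0 < m \<and> m < n \<and>
       A0 < b ^ (p ^ m) / \<sigma> ^ (n - m) \<and> b ^ (p ^ m) / \<sigma> ^ (n - m) < A1} :: (nat \<times> nat) set)}"

end

theory Submission
  imports Defs
begin

(* Write b = sigma powr y with y > 0, so that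
     b ^ (p ^ m) / sigma ^ k = sigma powr (p ^ m * y - k).
   The ratio lies in (A0, A1) when p ^ m * y - k lies in the window
   (ln A1 / ln sigma, ln A0 / ln sigma).  Choosing k = floor (p ^ m * y) - j for a fixed
   integer j, this happens as soon as the fractional part frac (p ^ m * y) hits a fixed
   subinterval (c, d) of [0, 1].  By a base-q digit argument (q a power of p), for almost
   every real y the orbit frac (p ^ m * y) hits (c, d) infinitely often: the points of
   [0, 1) whose first K digits avoid one digit a have measure at most ((q - 1) / q) ^ K.
   Since y \<mapsto> sigma powr y is smooth, the non-good b in [0, 1] form a null set.
   The good set is a countable intersection of relatively open sets (continuity of
   b \<mapsto> b ^ (p ^ m)), and a conull subset of [0, 1] is dense in [0, 1].
   The file follows this order: digit sets and their measure, recurrence of the orbit,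
   translation to the good set, and finally the topological conclusions. *)

(* Multiplying by an integer commutes with reduction mod 1; this is what lets the orbit
   x \<mapsto> q * x (mod 1) be iterated on fractional parts. *)
lemma frac_of_nat_mult_frac: "frac (real n * frac x) = frac (real n * x)"
proof -
  have shift: "real n * frac x = real n * x - of_int (int n * \<lfloor>x\<rfloor>)"
    by (simp add: frac_def algebra_simps)
  have "frac (z - of_int k) = frac z" for z :: real and k
    by (simp add: frac_def)
  then show ?thesis by (subst shift)
qed

lemma leading_digit_split:
  fixes y :: real and q :: nat
  assumes q: "q > 0" and y: "y \<in> {0..<1}"
  shows "nat \<lfloor>real q * y\<rfloor> < q"
    and "y = (real (nat \<lfloor>real q * y\<rfloor>) + frac (real q * y)) / q"
proof -
  have qy: "0 \<le> real q * y" "real q * y < q" using q y by auto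
  then show "nat \<lfloor>real q * y\<rfloor> < q" by (simp add: nat_less_iff floor_less_iff)
  have "real (nat \<lfloor>real q * y\<rfloor>) = of_int \<lfloor>real q * y\<rfloor>" using qy by simp
  then show "y = (real (nat \<lfloor>real q * y\<rfloor>) + frac (real q * y)) / q"
    using q by (simp add: frac_def)
qed

lemma digit_eq_iff_interval:
  fixes y :: real and q a :: nat
  assumes "q > 0" "0 \<le> y"
  shows "nat \<lfloor>real q * y\<rfloor> = a \<longleftrightarrow> y \<in> {real a / q..<(real a + 1) / q}"
  using assms by (auto simp: field_simps nat_eq_iff floor_eq_iff)

lemma affine_image_lmeasurable:
  fixes S :: "real set" and b q :: real
  assumes S: "S \<in> lmeasurable" and q: "q > 0"
  shows "(\<lambda>s. (b + s) / q) ` S \<in> lmeasurable"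
    and "measure lebesgue ((\<lambda>s. (b + s) / q) ` S) = measure lebesgue S / q"
proof -
  have affine: "(\<lambda>s. (b + s) / q) = (\<lambda>x. (1 / q) *\<^sub>R x + b / q)"
    by (auto simp: fun_eq_iff add_divide_distrib)
  have preimage: "(\<lambda>s. (b + s) / q) ` S = (\<lambda>x. - b + q * x) -` S"
    using q by (force simp: field_simps)
  have "(\<lambda>x. - b + (\<Sum>j\<in>Basis. (q * (x \<bullet> j)) *\<^sub>R j)) \<in> lebesgue \<rightarrow>\<^sub>M lebesgue"
    using q by (intro lebesgue_affine_measurable) auto
  then have "(\<lambda>x::real. - b + q * x) \<in> lebesgue \<rightarrow>\<^sub>M lebesgue" by simp
  from measurable_sets[OF this] have "(\<lambda>x. - b + q * x) -` S \<inter> space lebesgue \<in> sets lebesgue"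
    using S by (auto simp: fmeasurable_def)
  then have sets: "(\<lambda>s. (b + s) / q) ` S \<in> sets lebesgue" unfolding preimage by simp
  have "emeasure lebesgue ((\<lambda>s. (b + s) / q) ` S) = \<bar>1 / q\<bar> ^ DIM(real) * emeasure lebesgue S"
    unfolding affine by (rule emeasure_lebesgue_affine)
  also have "\<dots> < \<infinity>"
    using S ennreal_less_top ennreal_mult_less_top unfolding fmeasurable_def
    by (metis (no_types, lifting) infinity_ennreal_def mem_Collect_eq)
  finally show "(\<lambda>s. (b + s) / q) ` S \<in> lmeasurable"
    using sets by (simp add: fmeasurable_def)
  have "measure lebesgue ((\<lambda>s. (b + s) / q) ` S) = \<bar>1 / q\<bar> ^ DIM(real) * measure lebesgue S"
    unfolding affine by (rule measure_lebesgue_affine)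
  then show "measure lebesgue ((\<lambda>s. (b + s) / q) ` S) = measure lebesgue S / q"
    using q by simp
qed

(* The union of the contracted copies (b + S) / q over a set D of digits b: the points
   whose leading base-q digit lies in D and whose remaining expansion lies in S. *)
definition digit_copies :: "nat set \<Rightarrow> nat \<Rightarrow> real set \<Rightarrow> real set" where
  "digit_copies D q S = (\<Union>b\<in>D. (\<lambda>s. (real b + s) / q) ` S)"

lemma digit_copies_measure:
  assumes D: "finite D" and S: "S \<in> lmeasurable" and q: "q > 0"
  shows "digit_copies D q S \<in> lmeasurable"
    and "measure lebesgue (digit_copies D q S) \<le> card D * measure lebesgue S / q"
proof -
  have copy: "(\<lambda>s. (real b + s) / q) ` S \<in> lmeasurable" for b
    using affine_image_lmeasurable(1) S q by simp
  then show "digit_copies D q S \<in> lmeasurable"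
    unfolding digit_copies_def using D by (intro fmeasurable.finite_UN) auto
  have "measure lebesgue (digit_copies D q S)
      \<le> (\<Sum>b\<in>D. measure lebesgue ((\<lambda>s. (real b + s) / q) ` S))"
    unfolding digit_copies_def using D copy by (intro measure_UNION_le) auto
  also have "\<dots> = card D * measure lebesgue S / q"
    using affine_image_lmeasurable(2) S q by simp
  finally show "measure lebesgue (digit_copies D q S) \<le> card D * measure lebesgue S / q" .
qed

lemma mem_digit_copies:
  fixes y :: real and q :: nat
  assumes "q > 0" "y \<in> {0..<1}" "nat \<lfloor>real q * y\<rfloor> \<in> D" "frac (real q * y) \<in> S"
  shows "y \<in> digit_copies D q S"
  unfolding digit_copies_def using assms leading_digit_split[OF assms(1,2)] by blast

(* avoiding_digit q a K: the points of [0, 1) whose first K base-q digits all differ from a. *)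
fun avoiding_digit :: "nat \<Rightarrow> nat \<Rightarrow> nat \<Rightarrow> real set" where
  "avoiding_digit q a 0 = {0..<1}"
| "avoiding_digit q a (Suc K) = digit_copies ({0..<q} - {a}) q (avoiding_digit q a K)"

(* Each avoided digit keeps only q - 1 of the q copies, hence measure ((q - 1) / q) ^ K. *)
lemma avoiding_digit_measure:
  assumes q: "q > 0" and a: "a < q"
  shows "avoiding_digit q a K \<in> lmeasurable \<and>
    measure lebesgue (avoiding_digit q a K) \<le> ((real q - 1) / q) ^ K"
proof (induction K)
  case 0
  have "{0..<1::real} \<in> lmeasurable" by (intro bounded_set_imp_lmeasurable) auto
  then show ?case by simp
next
  case (Suc K)
  let ?H = "avoiding_digit q a K"
  have card: "real (card ({0..<q} - {a})) = real q - 1" using a by (simp add: of_nat_diff)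
  have "measure lebesgue (avoiding_digit q a (Suc K)) \<le> (real q - 1) * measure lebesgue ?H / q"
    using digit_copies_measure(2)[of "{0..<q} - {a}" ?H q] Suc q unfolding card by simp
  also have "\<dots> \<le> (real q - 1) * ((real q - 1) / q) ^ K / q"
    using Suc q by (intro divide_right_mono mult_left_mono) auto
  also have "\<dots> = ((real q - 1) / q) ^ Suc K" by simp
  finally show ?case
    using digit_copies_measure(1)[of "{0..<q} - {a}" ?H q] Suc q by simp
qed

lemma avoiding_digit_cover:
  fixes y :: real
  assumes q: "q > 0"
    and "y \<in> {0..<1}" "\<forall>i<K. frac (real q ^ i * y) \<notin> {real a / q..<(real a + 1) / q}"
  shows "y \<in> avoiding_digit q a K"
  using assms(2,3)
proof (induction K arbitrary: y)
  case 0
  then show ?case by simp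
next
  case (Suc K)
  have "frac y = y" using Suc.prems(1) by (simp add: frac_eq)
  then have "y \<notin> {real a / q..<(real a + 1) / q}" using Suc.prems(2) by force
  then have digit: "nat \<lfloor>real q * y\<rfloor> \<in> {0..<q} - {a}"
    using digit_eq_iff_interval[OF q] leading_digit_split(1)[OF q] Suc.prems(1) by auto
  have shift: "frac (real q ^ i * frac (real q * y)) = frac (real q ^ Suc i * y)" for i
    using frac_of_nat_mult_frac[of "q ^ i" "real q * y"] by (simp add: ac_simps)
  have "\<forall>i<K. frac (real q ^ i * frac (real q * y)) \<notin> {real a / q..<(real a + 1) / q}"
    unfolding shift using Suc.prems(2) Suc_mono by blast
  then have "frac (real q * y) \<in> avoiding_digit q a K"
    using Suc.IH by (simp add: frac_lt_1)
  from mem_digit_copies[OF q Suc.prems(1) digit this] show ?case by simp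
qed

lemma digit_interval_inside:
  fixes c d :: real and p :: nat
  assumes c: "0 \<le> c" and cd: "c < d" and d: "d \<le> 1" and p: "2 \<le> p"
  obtains r a where "a < p ^ r" "{real a / p ^ r..<(real a + 1) / p ^ r} \<subseteq> {c<..<d}"
proof -
  from real_arch_pow[of "real p" "2 / (d - c)"] p obtain r where r: "2 / (d - c) < real p ^ r"
    by auto
  define q where "q = p ^ r"
  have q: "q > 0" using p by (simp add: q_def)
  have short: "2 / real q < d - c" using r cd q by (simp add: q_def field_simps)
  define a where "a = nat (\<lfloor>c * q\<rfloor> + 1)"
  have a: "real a = of_int \<lfloor>c * q\<rfloor> + 1" using c unfolding a_def by simp
  have lower: "c < real a / q" using a q by (simp add: field_simps) linarith
  have "real a + 1 \<le> c * q + 2" using a by linarith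
  then have "(real a + 1) / q \<le> (c * q + 2) / q" using q by (simp add: divide_right_mono)
  also have "\<dots> = c + 2 / q" using q by (simp add: field_simps)
  finally have "(real a + 1) / q \<le> c + 2 / q" .
  then have upper: "(real a + 1) / q < d" using short by linarith
  then have "real a + 1 < d * q" using q by (simp add: field_simps)
  also have "\<dots> \<le> q" using c cd d by (intro mult_left_le_one_le) auto
  finally have "a < q" by linarith
  then have "a < p ^ r" by (simp add: q_def)
  moreover have "{real a / q..<(real a + 1) / q} \<subseteq> {c<..<d}" using lower upper by auto
  ultimately show thesis using that q_def by simp
qed

lemma tail_orbit_avoids_digit:
  fixes y c d :: real and p r a N K :: nat
  assumes p: "p > 0" and digit: "{real a / p ^ r..<(real a + 1) / p ^ r} \<subseteq> {c<..<d}"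
    and avoid: "\<forall>m\<ge>N. frac (real p ^ m * y) \<notin> {c<..<d}"
  shows "frac (real p ^ N * y) \<in> avoiding_digit (p ^ r) a K"
proof -
  define q where "q = p ^ r"
  have q: "q > 0" using p by (simp add: q_def)
  have digit_q: "{real a / q..<(real a + 1) / q} \<subseteq> {c<..<d}" using digit by (simp add: q_def)
  have pow: "p ^ N * q ^ i = p ^ (N + r * i)" for i
    by (simp add: q_def power_add power_mult)
  have "frac (real q ^ i * frac (real p ^ N * y)) = frac (real (p ^ N * q ^ i) * y)" for i
    using frac_of_nat_mult_frac[of "q ^ i" "real p ^ N * y"] by (simp add: ac_simps)
  then have shift: "frac (real q ^ i * frac (real p ^ N * y)) = frac (real p ^ (N + r * i) * y)" for i
    unfolding pow of_nat_power .
  have "frac (real p ^ (N + r * i) * y) \<notin> {c<..<d}" for i using avoid by simp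
  then have "\<forall>i<K. frac (real q ^ i * frac (real p ^ N * y)) \<notin> {real a / q..<(real a + 1) / q}"
    unfolding shift using digit_q by blast
  then show ?thesis
    using avoiding_digit_cover[OF q] unfolding q_def by (simp add: frac_lt_1)
qed

(* Points of [0, 1) whose orbit avoids (c, d) from time N on form a null set: they lie in
   p ^ N scaled copies of every digit-avoiding set, whose measures tend to 0. *)
lemma unit_orbit_avoiding_negligible:
  fixes c d :: real and p N :: nat
  assumes cd: "0 \<le> c" "c < d" "d \<le> 1" and p: "2 \<le> p"
  shows "negligible {y \<in> {0..<1}. \<forall>m\<ge>N. frac (real p ^ m * y) \<notin> {c<..<d}}"
    (is "negligible ?E")
  unfolding negligible_outer_le
proof (intro allI impI)
  fix e :: real assume e: "e > 0"
  obtain r a where a: "a < p ^ r" and digit: "{real a / p ^ r..<(real a + 1) / p ^ r} \<subseteq> {c<..<d}"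
    using digit_interval_inside[OF cd p] .
  define q where "q = p ^ r"
  define Q where "Q = p ^ N"
  have q: "q > 0" and Q: "Q > 0" using p by (simp_all add: q_def Q_def)
  have "(real q - 1) / q < 1" using q by simp
  then obtain K where K: "((real q - 1) / q) ^ K < e" using real_arch_pow_inv[OF e] by blast
  have H: "avoiding_digit q a K \<in> lmeasurable"
    "measure lebesgue (avoiding_digit q a K) \<le> ((real q - 1) / q) ^ K"
    using avoiding_digit_measure[OF q] a by (auto simp: q_def)
  define T where "T = digit_copies {0..<Q} Q (avoiding_digit q a K)"
  have T: "T \<in> lmeasurable" "measure lebesgue T \<le> measure lebesgue (avoiding_digit q a K)"
    using digit_copies_measure[OF _ H(1) Q, of "{0..<Q}"] Q unfolding T_def by simp_all
  have "?E \<subseteq> T"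
  proof
    fix y assume y: "y \<in> ?E"
    then have "frac (real Q * y) \<in> avoiding_digit q a K"
      using tail_orbit_avoids_digit[OF _ digit] p unfolding q_def Q_def by simp
    then show "y \<in> T"
      unfolding T_def using mem_digit_copies[OF Q] leading_digit_split(1)[OF Q] y by auto
  qed
  then show "\<exists>T. ?E \<subseteq> T \<and> T \<in> lmeasurable \<and> measure lebesgue T \<le> e"
    using T H(2) K by (intro exI[of _ T]) auto
qed

(* Main recurrence property: for almost every real y, the orbit frac (p ^ m * y) enters any
   fixed subinterval (c, d) of [0, 1] infinitely often.  Reduce to [0, 1) by integer shifts. *)
lemma orbit_eventually_avoiding_negligible:
  fixes c d :: real and p :: nat
  assumes cd: "0 \<le> c" "c < d" "d \<le> 1" and p: "2 \<le> p"
  shows "negligible {y. \<forall>\<^sub>F m in sequentially. frac (real p ^ m * y) \<notin> {c<..<d}}"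
proof -
  define E where "E N = {y \<in> {0..<1}. \<forall>m\<ge>N. frac (real p ^ m * y) \<notin> {c<..<d}}" for N
  have "{y. \<forall>\<^sub>F m in sequentially. frac (real p ^ m * y) \<notin> {c<..<d}}
      \<subseteq> (\<Union>(N, j) \<in> UNIV. (+) (of_int j) ` E N)"
  proof
    fix y assume "y \<in> {y. \<forall>\<^sub>F m in sequentially. frac (real p ^ m * y) \<notin> {c<..<d}}"
    then obtain N where N: "\<forall>m\<ge>N. frac (real p ^ m * y) \<notin> {c<..<d}"
      by (auto simp: eventually_sequentially)
    have "frac (real p ^ m * frac y) = frac (real p ^ m * y)" for m
      using frac_of_nat_mult_frac[of "p ^ m" y] by simp
    then have "frac y \<in> E N" using N by (simp add: E_def frac_lt_1)
    moreover have "y = of_int \<lfloor>y\<rfloor> + frac y" by (simp add: frac_def)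
    ultimately have "y \<in> (+) (of_int \<lfloor>y\<rfloor>) ` E N" by (rule rev_image_eqI)
    then show "y \<in> (\<Union>(N, j) \<in> UNIV. (+) (of_int j) ` E N)" by (intro UN_I[of "(N, \<lfloor>y\<rfloor>)"]) simp_all
  qed
  moreover have "negligible (\<Union>(N, j::int) \<in> UNIV. (+) (of_int j) ` E N)"
    unfolding E_def using unit_orbit_avoiding_negligible[OF cd p]
    by (intro negligible_countable_Union) (auto intro: negligible_translation)
  ultimately show ?thesis by (rule negligible_subset[rotated])
qed

lemma infinite_pairs_iff_infinite_snd:
  fixes S :: "(nat \<times> nat) set"
  assumes below: "\<And>m n. (m, n) \<in> S \<Longrightarrow> m < n"
  shows "infinite S \<longleftrightarrow> infinite (snd ` S)"
proof
  assume "infinite S"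
  show "infinite (snd ` S)"
  proof
    assume "finite (snd ` S)"
    then obtain B where B: "\<And>n. n \<in> snd ` S \<Longrightarrow> n \<le> B"
      by (meson finite_nat_set_iff_bounded_le)
    have "(m, n) \<in> {..B} \<times> {..B}" if mn: "(m, n) \<in> S" for m n
    proof -
      have "n \<le> B" using B image_eqI[of n snd "(m, n)"] mn by simp
      then show ?thesis using below[OF mn] by simp
    qed
    then have "S \<subseteq> {..B} \<times> {..B}" by (simp add: subset_iff)
    then show False using \<open>infinite S\<close> finite_subset by blast
  qed
next
  assume "infinite (snd ` S)"
  then show "infinite S" using finite_imageI by blast
qed

lemma good_set_iff:
  "good_set A0 A1 \<sigma> p = {b \<in> {0..1}. \<forall>N. \<exists>n\<ge>N. \<exists>m. 0 < m \<and> m < n \<and>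
       A0 < b ^ (p ^ m) / \<sigma> ^ (n - m) \<and> b ^ (p ^ m) / \<sigma> ^ (n - m) < A1}"
  unfolding good_set_def
  by (subst infinite_pairs_iff_infinite_snd) (auto simp: infinite_nat_iff_unbounded_le image_iff)

lemma power_ratio_powr:
  fixes \<sigma> y :: real and p m k :: nat
  assumes "0 < \<sigma>"
  shows "(\<sigma> powr y) ^ (p ^ m) / \<sigma> ^ k = \<sigma> powr (real p ^ m * y - real k)"
  using assms by (simp add: powr_realpow[symmetric] powr_powr powr_diff mult.commute)

lemma powr_between:
  fixes \<sigma> w A0 A1 :: real
  assumes "0 < \<sigma>" "\<sigma> < 1" "0 < A0" "0 < A1"
    and "ln A1 / ln \<sigma> < w" "w < ln A0 / ln \<sigma>"
  shows "A0 < \<sigma> powr w \<and> \<sigma> powr w < A1"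
proof -
  have "ln \<sigma> < 0" using assms by simp
  then have "ln A0 < w * ln \<sigma>" "w * ln \<sigma> < ln A1"
    using assms(5,6) by (simp_all add: field_simps)
  moreover have "\<sigma> powr w = exp (w * ln \<sigma>)" using assms by (simp add: powr_def)
  ultimately show ?thesis using assms(3,4) by (metis exp_less_mono exp_ln)
qed

lemma unit_window:
  fixes \<alpha> \<beta> :: real
  assumes "\<alpha> < \<beta>"
  obtains j :: int and c d :: real where "0 \<le> c" "c < d" "d \<le> 1"
    "\<And>s. c < s \<Longrightarrow> s < d \<Longrightarrow> \<alpha> < of_int j + s \<and> of_int j + s < \<beta>"
proof
  show "0 \<le> frac \<alpha>" "frac \<alpha> < min 1 (\<beta> - of_int \<lfloor>\<alpha>\<rfloor>)" "min 1 (\<beta> - of_int \<lfloor>\<alpha>\<rfloor>) \<le> 1"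
    using assms frac_lt_1[of \<alpha>] by (auto simp: frac_def)
  show "\<alpha> < of_int \<lfloor>\<alpha>\<rfloor> + s \<and> of_int \<lfloor>\<alpha>\<rfloor> + s < \<beta>"
    if "frac \<alpha> < s" "s < min 1 (\<beta> - of_int \<lfloor>\<alpha>\<rfloor>)" for s
    using that by (auto simp: frac_def)
qed

(* One hit of the orbit in (c, d), at a time where p ^ m * y exceeds j + 1, yields an exponent
   k = floor (p ^ m * y) - j \<ge> 1 with the ratio in (A0, A1). *)
lemma pair_from_orbit_hit:
  fixes \<sigma> A0 A1 y c d :: real and j :: int and p m :: nat
  assumes \<sigma>: "0 < \<sigma>" "\<sigma> < 1" and A: "0 < A0" "0 < A1"
    and window: "\<And>s. c < s \<Longrightarrow> s < d \<Longrightarrow>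
                   ln A1 / ln \<sigma> < of_int j + s \<and> of_int j + s < ln A0 / ln \<sigma>"
    and hit: "frac (real p ^ m * y) \<in> {c<..<d}" and large: "of_int j + 1 \<le> real p ^ m * y"
  obtains k :: nat where "1 \<le> k"
    "A0 < (\<sigma> powr y) ^ (p ^ m) / \<sigma> ^ k" "(\<sigma> powr y) ^ (p ^ m) / \<sigma> ^ k < A1"
proof
  define z where "z = real p ^ m * y"
  define k where "k = nat (\<lfloor>z\<rfloor> - j)"
  have floor_large: "j + 1 \<le> \<lfloor>z\<rfloor>" using large unfolding z_def by linarith
  then show "1 \<le> k" unfolding k_def by linarith
  have "z - real k = of_int j + frac z"
    using floor_large unfolding k_def frac_def by simp
  then have "A0 < \<sigma> powr (z - real k) \<and> \<sigma> powr (z - real k) < A1"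
    using powr_between[OF \<sigma> A] window hit unfolding z_def by simp
  then show "A0 < (\<sigma> powr y) ^ (p ^ m) / \<sigma> ^ k" "(\<sigma> powr y) ^ (p ^ m) / \<sigma> ^ k < A1"
    using power_ratio_powr[OF \<sigma>(1)] unfolding z_def by simp_all
qed

lemma good_set_if_orbit_recurrent:
  fixes \<sigma> A0 A1 y c d :: real and j :: int and p :: nat
  assumes \<sigma>: "0 < \<sigma>" "\<sigma> < 1" and A: "0 < A0" "A0 < A1" and p: "2 \<le> p" and y: "0 < y"
    and window: "\<And>s. c < s \<Longrightarrow> s < d \<Longrightarrow>
                   ln A1 / ln \<sigma> < of_int j + s \<and> of_int j + s < ln A0 / ln \<sigma>"
    and recurrent: "\<exists>\<^sub>F m in sequentially. frac (real p ^ m * y) \<in> {c<..<d}"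
  shows "\<sigma> powr y \<in> good_set A0 A1 \<sigma> p"
proof -
  obtain M where M: "(of_int j + 1) / y < real p ^ M"
    using real_arch_pow[of "real p"] p by fastforce
  have "\<forall>\<^sub>F m in sequentially. 1 \<le> m \<and> of_int j + 1 \<le> real p ^ m * y"
    unfolding eventually_sequentially
  proof (intro exI[of _ "Suc M"] allI impI)
    fix m assume m: "Suc M \<le> m"
    then have "real p ^ M \<le> real p ^ m" using p by (intro power_increasing) auto
    then have "real p ^ M * y \<le> real p ^ m * y" using y by (intro mult_right_mono) auto
    moreover have "of_int j + 1 < real p ^ M * y" using M y by (simp add: field_simps)
    ultimately show "1 \<le> m \<and> of_int j + 1 \<le> real p ^ m * y"
      using m by linarith
  qed
  with recurrent have "\<exists>\<^sub>F m in sequentially.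
      frac (real p ^ m * y) \<in> {c<..<d} \<and> 1 \<le> m \<and> of_int j + 1 \<le> real p ^ m * y"
    by (rule frequently_eventually_frequently)
  then have hits: "\<forall>N. \<exists>m\<ge>N. frac (real p ^ m * y) \<in> {c<..<d} \<and> 1 \<le> m \<and>
      of_int j + 1 \<le> real p ^ m * y"
    unfolding frequently_sequentially .
  have "\<exists>n\<ge>N. \<exists>m. 0 < m \<and> m < n \<and> A0 < (\<sigma> powr y) ^ (p ^ m) / \<sigma> ^ (n - m) \<and>
      (\<sigma> powr y) ^ (p ^ m) / \<sigma> ^ (n - m) < A1" for N
  proof -
    obtain m where m: "N \<le> m" "1 \<le> m" "frac (real p ^ m * y) \<in> {c<..<d}"
      "of_int j + 1 \<le> real p ^ m * y" using hits by blast
    obtain k where "1 \<le> k" "A0 < (\<sigma> powr y) ^ (p ^ m) / \<sigma> ^ k" "(\<sigma> powr y) ^ (p ^ m) / \<sigma> ^ k < A1"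
      using pair_from_orbit_hit[OF \<sigma> A(1) _ window m(3,4)] A by auto
    then show ?thesis using m by (intro exI[of _ "m + k"] conjI exI[of _ m]) auto
  qed
  moreover have "\<sigma> powr y \<in> {0..1}" using \<sigma> y by (simp add: powr_le1)
  ultimately show ?thesis unfolding good_set_iff by blast
qed

lemma non_good_exponent_avoids:
  fixes \<sigma> A0 A1 b c d :: real and j :: int and p :: nat
  assumes \<sigma>: "0 < \<sigma>" "\<sigma> < 1" and A: "0 < A0" "A0 < A1" and p: "2 \<le> p"
    and window: "\<And>s. c < s \<Longrightarrow> s < d \<Longrightarrow>
                   ln A1 / ln \<sigma> < of_int j + s \<and> of_int j + s < ln A0 / ln \<sigma>"
    and b: "0 < b" "b < 1" "b \<notin> good_set A0 A1 \<sigma> p"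
  shows "\<forall>\<^sub>F m in sequentially. frac (real p ^ m * log \<sigma> b) \<notin> {c<..<d}"
proof (rule ccontr)
  assume "\<not> ?thesis"
  then have "\<exists>\<^sub>F m in sequentially. frac (real p ^ m * log \<sigma> b) \<in> {c<..<d}"
    by (simp add: not_eventually)
  moreover have "0 < log \<sigma> b" using b \<sigma> by (simp add: log_def divide_neg_neg)
  ultimately have "\<sigma> powr (log \<sigma> b) \<in> good_set A0 A1 \<sigma> p"
    using good_set_if_orbit_recurrent[OF \<sigma> A p _ window] by blast
  then show False using b \<sigma> by simp
qed

(* Full measure: the non-good points of [0, 1] other than 0 and 1 are images, under the smooth
   map y \<mapsto> sigma powr y, of the null set of y whose orbit eventually avoids (c, d). *)
lemma non_good_negligible:
  fixes A0 A1 \<sigma> :: real and p :: nat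
  assumes A: "0 < A0" "A0 < A1" and \<sigma>: "0 < \<sigma>" "\<sigma> < 1" and p: "2 \<le> p"
  shows "negligible ({0..1} - good_set A0 A1 \<sigma> p)"
proof -
  have "ln \<sigma> < 0" "ln A0 < ln A1" using A \<sigma> by simp_all
  then have "ln A1 / ln \<sigma> < ln A0 / ln \<sigma>" by (simp add: divide_strict_right_mono_neg)
  then obtain j c d where cd: "0 \<le> c" "c < d" "d \<le> 1"
    and window: "\<And>s. c < s \<Longrightarrow> s < d \<Longrightarrow>
                   ln A1 / ln \<sigma> < of_int j + s \<and> of_int j + s < ln A0 / ln \<sigma>"
    by (rule unit_window) blast
  define B where "B = {y. \<forall>\<^sub>F m in sequentially. frac (real p ^ m * y) \<notin> {c<..<d}}"
  have "negligible B" unfolding B_def using orbit_eventually_avoiding_negligible[OF cd p] .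
  moreover have "((\<lambda>y. \<sigma> powr y) has_real_derivative (ln \<sigma> * \<sigma> powr y)) (at y)" for y
    using has_real_derivative_const_powr[where f = "\<lambda>y. y" and f' = "\<lambda>_. 1" and a = \<sigma>] by simp
  then have "(\<lambda>y. \<sigma> powr y) differentiable_on B"
    by (meson differentiableI has_field_derivative_imp_has_derivative
        differentiable_at_imp_differentiable_on)
  ultimately have "negligible ((\<lambda>y. \<sigma> powr y) ` B)"
    by (rule negligible_differentiable_image_negligible[OF order_refl])
  then have "negligible ({0, 1} \<union> (\<lambda>y. \<sigma> powr y) ` B)" by simp
  moreover have "b \<in> {0, 1} \<union> (\<lambda>y. \<sigma> powr y) ` B" if b: "b \<in> {0..1} - good_set A0 A1 \<sigma> p" for b
  proof (cases "b = 0 \<or> b = 1")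
    case False
    then have "0 < b" "b < 1" using b by auto
    then have "log \<sigma> b \<in> B" "\<sigma> powr (log \<sigma> b) = b"
      using non_good_exponent_avoids[OF \<sigma> A p window] b \<sigma> by (simp_all add: B_def)
    then show ?thesis by (metis UnI2 image_eqI)
  qed blast
  ultimately show ?thesis by (meson negligible_subset subsetI)
qed

(* The good set is the intersection over N of the relatively open sets of b admitting a good pair
   with n \<ge> N; openness holds because b \<mapsto> b ^ (p ^ m) / sigma ^ (n - m) is continuous. *)
lemma good_set_gdelta: "gdelta_in (top_of_set {0..1}) (good_set A0 A1 \<sigma> p)"
proof -
  define U where "U N = {b::real. \<exists>n\<ge>N. \<exists>m. 0 < m \<and> m < n \<and>
       A0 < b ^ (p ^ m) / \<sigma> ^ (n - m) \<and> b ^ (p ^ m) / \<sigma> ^ (n - m) < A1}" for N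
  have U: "open (U N)" for N
    unfolding U_def divide_inverse
    by (intro open_Collect_ex open_Collect_conj open_Collect_const open_Collect_less continuous_intros)
  have "good_set A0 A1 \<sigma> p = (\<Inter>N. {0..1} \<inter> U N)"
    unfolding good_set_iff U_def by auto
  also have "gdelta_in (top_of_set {0..1}) \<dots>"
    by (intro gdelta_in_Inter open_imp_gdelta_in) (auto intro: openin_open_Int U)
  finally show ?thesis .
qed

(* A subset with negligible complement in a nondegenerate interval is dense in it, since every
   subinterval of positive length is non-negligible. *)
lemma interval_subset_closure_if_conegligible:
  fixes S :: "real set" and a b :: real
  assumes ab: "a < b" and null: "negligible ({a..b} - S)"
  shows "{a..b} \<subseteq> closure S"
proof
  fix x assume x: "x \<in> {a..b}"
  show "x \<in> closure S" unfolding closure_approachable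
  proof (intro allI impI)
    fix e :: real assume e: "e > 0"
    define l u where "l = max a (x - e / 2)" and "u = min b (x + e / 2)"
    have "l < u" using ab x e by (auto simp: l_def u_def)
    then have "\<not> negligible {l..u}" using negligible_interval(1)[of l u] by simp
    then obtain y where "y \<in> {l..u}" "y \<notin> {a..b} - S"
      using negligible_subset[OF null] by blast
    moreover have "{l..u} \<subseteq> {a..b}" "\<And>y. y \<in> {l..u} \<Longrightarrow> dist y x < e"
      using e by (auto simp: l_def u_def dist_real_def)
    ultimately show "\<exists>y\<in>S. dist y x < e" by blast
  qed
qed

theorem mainTheorem2:
  fixes A0 A1 \<sigma> :: real and p :: nat
  assumes "0 < A0" "A0 < A1" "0 < \<sigma>" "\<sigma> < 1" "2 \<le> p"
  shows "gdelta_in (top_of_set {0..1}) (good_set A0 A1 \<sigma> p)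
     \<and> {0..1} \<subseteq> closure (good_set A0 A1 \<sigma> p)
     \<and> good_set A0 A1 \<sigma> p \<in> sets lebesgue
     \<and> emeasure lebesgue ({0..1} - good_set A0 A1 \<sigma> p) = 0"
proof -
  let ?G = "good_set A0 A1 \<sigma> p"
  have null: "negligible ({0..1} - ?G)" by (rule non_good_negligible[OF assms])
  then have null_set: "{0..1} - ?G \<in> null_sets lebesgue" by (simp add: negligible_iff_null_sets)
  have "?G = {0..1} - ({0..1} - ?G)" unfolding good_set_def by blast
  also have "\<dots> \<in> sets lebesgue" by (rule sets.Diff) (simp_all add: null_setsD2[OF null_set])
  finally have "?G \<in> sets lebesgue" .
  then show ?thesis
    using good_set_gdelta interval_subset_closure_if_conegligible[OF _ null] null_setsD1[OF null_set]
    by simp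
qed

end
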